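(* Let $P^0,P^1\in\Delta^{n-1}_+$ with $P^0\succ_{P^*}P^1$. Then $P^1\in P^0+\mathbf{Q}(P^0,P^* )$.
   Context: Fix $n\ge 2$ and a positive equilibrium distribution $P^*=(p^*_i)$, $p^*_i>0$, $\sum_i p^*_i=1$. Let $\Delta^{n-1}_+=\{P\in\mathbb{R}^n: p_i>0,\ \sum_i p_i=1\}$. A Markov chain with equilibrium $P^*$ is given by rate constants $q_{ij}\ge 0$ ($i\neq j$) satisfying $\sum_{j\ne i}q_{ij}p^*_j=\bigl(\sum_{j\ne i}q_{ji}\bigr)p^*_i$ for all $i$, with Kolmogorov equation $\frac{dp_i}{dt}=\sum_{j\ne i}(q_{ij}p_j-q_{ji}p_i)$. $P^0\succ^0_{P^*}P^1$ if for some such chain the solution with $P(0)=P^0$ has $P(1)=P^1$; the Markov order $\succ_{P^*}$ is the closed transitive closure of $\succ^0_{P^*}$. For $i\neq j$ let $\gamma^{ji}$ be the vector with $\gamma^{ji}_j=-1$, $\gamma^{ji}_i=1$, other coordinates $0$; ${\rm cone}$ denotes non-negative linear combinations; ${\rm sign}$ is the three-valued sign function; $\mathbf{Q}(P,P^* )={\rm cone}\{\gamma^{ji}\,{\rm sign}(\tfrac{p_j}{p^*_j}-\tfrac{p_i}{p^*_i}) : 1\le j<i\le n\}$. *)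

theory Defs
  imports "HOL-Analysis.Analysis"
begin

text \<open>Distributions are vectors indexed by a finite linearly ordered type 'n
  (the index set {1..n}, n = CARD('n)).\<close>

definition pos_simplex :: "(real^'n) set" where
  "pos_simplex = {P. (\<forall>i. P $ i > 0) \<and> (\<Sum>i\<in>UNIV. P $ i) = 1}"

text \<open>Rate constants q i j (for i \<noteq> j) of a Markov chain with equilibrium Pstar.\<close>
definition markov_rates :: "(real^'n) \<Rightarrow> ('n \<Rightarrow> 'n \<Rightarrow> real) \<Rightarrow> bool" where
  "markov_rates Pstar q \<longleftrightarrow>
     (\<forall>i j. i \<noteq> j \<longrightarrow> q i j \<ge> 0) \<and>
     (\<forall>i. (\<Sum>j\<in>UNIV - {i}. q i j * Pstar $ j) = (\<Sum>j\<in>UNIV - {i}. q j i) * Pstar $ i)"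

definition kolmogorov_rhs :: "('n \<Rightarrow> 'n \<Rightarrow> real) \<Rightarrow> real^'n \<Rightarrow> real^'n" where
  "kolmogorov_rhs q P = (\<chi> i. \<Sum>j\<in>UNIV - {i}. q i j * P $ j - q j i * P $ i)"

definition markov_step :: "(real^'n) \<Rightarrow> real^'n \<Rightarrow> real^'n \<Rightarrow> bool" where
  "markov_step Pstar P0 P1 \<longleftrightarrow>
     (\<exists>q P. markov_rates Pstar q \<and> P 0 = P0 \<and> P 1 = P1 \<and>
        (\<forall>t\<in>{0..1}. (P has_vector_derivative kolmogorov_rhs q (P t)) (at t within {0..1})))"

definition markov_order :: "(real^'n) \<Rightarrow> ((real^'n) \<times> (real^'n)) set" where
  "markov_order Pstar = \<Inter>{R. R \<subseteq> pos_simplex \<times> pos_simplex \<and>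
       {(P0, P1). P0 \<in> pos_simplex \<and> P1 \<in> pos_simplex \<and> markov_step Pstar P0 P1} \<subseteq> R \<and>
       trans R \<and> closedin (top_of_set (pos_simplex \<times> pos_simplex)) R}"

definition gamma :: "'n \<Rightarrow> 'n \<Rightarrow> real^'n" where
  "gamma j i = (\<chi> k. if k = i then 1 else if k = j then -1 else 0)"

definition Qcone :: "real^('n::{finite,linorder}) \<Rightarrow> real^('n::{finite,linorder}) \<Rightarrow> (real^('n::{finite,linorder})) set" where
  "Qcone P Pstar = {x. \<exists>c::_ \<Rightarrow> real. (\<forall>p. c p \<ge> 0) \<and>
      x = (\<Sum>(j,i)\<in>{(j,i). j < i}. c (j,i) *\<^sub>R
              (sgn (P $ j / Pstar $ j - P $ i / Pstar $ i) *\<^sub>R gamma j i))}"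

end

theory Submission
  imports Defs
begin

(* For every convex differentiable H the
   f-divergence  sum_k p*_k H(p_k/p*_k)  is non-increasing along any Kolmogorov
   flow with equilibrium P* (a discrete H-theorem).  Applying this to smooth
   approximations of the hinge  u |-> max (u - t) 0  shows that every hinge
   divergence D_t is monotone along one Markov step; being continuous, D_t stays
   monotone along the closed transitive closure, i.e. along the Markov order.
   Evaluating D_t at the minimum level of an upper set S of x^0 = P0/P* shows
   that y = P1 - P0 has total mass 0 and non-positive mass on every upper set.
   A greedy transfer argument (move mass from a positive entry to an entry of
   strictly larger x^0-value) shows that such a y is a non-negative combination
   of the vectors sgn(x^0_j - x^0_i) gamma^{ji}, i.e. y lies in the cone Q of P0 and P*. *)

section \<open>Monotonicity of f-divergences along Kolmogorov flows\<close>

lemma sum_offdiag_swap: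
  fixes f :: "'n::finite \<Rightarrow> 'n \<Rightarrow> real"
  shows "(\<Sum>k\<in>UNIV. \<Sum>j\<in>UNIV-{k}. f k j) = (\<Sum>k\<in>UNIV. \<Sum>j\<in>UNIV-{k}. f j k)"
proof -
  have "UNIV - {k} = {j. j \<noteq> k}" for k :: 'n by auto
  moreover have "{j. k \<noteq> j} = {j. j \<noteq> k}" for k :: 'n by auto
  ultimately show ?thesis
    using sum.swap_restrict[of UNIV UNIV f "\<lambda>k j. j \<noteq> k"] by simp
qed

text \<open>The balance condition of the rates says that the stationary flux out of every
  state equals the flux into it; hence weighting by a function of the source or of
  the target state gives the same total.\<close>
lemma balanced_flux_identity:
  fixes ps x :: "'n::finite \<Rightarrow> real" and q :: "'n \<Rightarrow> 'n \<Rightarrow> real" and g :: "real \<Rightarrow> real"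
  assumes bal: "\<forall>i. (\<Sum>j\<in>UNIV-{i}. q i j * ps j) = (\<Sum>j\<in>UNIV-{i}. q j i) * ps i"
  shows "(\<Sum>k\<in>UNIV. \<Sum>j\<in>UNIV-{k}. q k j * ps j * g (x k)) =
         (\<Sum>k\<in>UNIV. \<Sum>j\<in>UNIV-{k}. q k j * ps j * g (x j))"
proof -
  have "(\<Sum>k\<in>UNIV. \<Sum>j\<in>UNIV-{k}. q k j * ps j * g (x k)) =
        (\<Sum>k\<in>UNIV. (\<Sum>j\<in>UNIV-{k}. q k j * ps j) * g (x k))"
    by (simp add: sum_distrib_right)
  also have "\<dots> = (\<Sum>k\<in>UNIV. \<Sum>j\<in>UNIV-{k}. q j k * ps k * g (x k))"
    using bal by (simp add: sum_distrib_right)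
  also have "\<dots> = (\<Sum>k\<in>UNIV. \<Sum>j\<in>UNIV-{k}. q k j * ps j * g (x j))"
    by (rule sum_offdiag_swap)
  finally show ?thesis .
qed

text \<open>Dissipation inequality: if H lies above its tangents with slope H', then the
  time derivative of the f-divergence, expressed in x = P/P*, is non-positive.
  It equals the sum of  q_kj p*_j (H(x_k) - H(x_j) + H'(x_k)(x_j - x_k)),
  each term of which is non-positive by convexity.\<close>
lemma kolmogorov_dissipation:
  fixes ps x :: "'n::finite \<Rightarrow> real" and q :: "'n \<Rightarrow> 'n \<Rightarrow> real"
    and H H' :: "real \<Rightarrow> real"
  assumes q: "\<forall>i j. i \<noteq> j \<longrightarrow> q i j \<ge> 0"
    and bal: "\<forall>i. (\<Sum>j\<in>UNIV-{i}. q i j * ps j) = (\<Sum>j\<in>UNIV-{i}. q j i) * ps i"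
    and ps: "\<forall>k. ps k > 0"
    and tangent: "\<forall>u v. H v \<ge> H u + H' u * (v - u)"
  shows "(\<Sum>k\<in>UNIV. H' (x k) * (\<Sum>j\<in>UNIV-{k}. q k j * (ps j * x j) - q j k * (ps k * x k))) \<le> 0"
proof -
  let ?S = "\<lambda>f. \<Sum>k\<in>UNIV. \<Sum>j\<in>UNIV-{k}. q k j * ps j * f k j"
  have "(\<Sum>k\<in>UNIV. H' (x k) * (\<Sum>j\<in>UNIV-{k}. q k j * (ps j * x j) - q j k * (ps k * x k)))
      = ?S (\<lambda>k j. x j * H' (x k)) - (\<Sum>k\<in>UNIV. \<Sum>j\<in>UNIV-{k}. q j k * ps k * (x k * H' (x k)))"
    by (simp add: sum_distrib_left sum_subtractf algebra_simps)
  also have "\<dots> = ?S (\<lambda>k j. x j * H' (x k)) - ?S (\<lambda>k j. x j * H' (x j))"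
    using sum_offdiag_swap[of "\<lambda>k j. q j k * ps k * (x k * H' (x k))"] by simp
  also have "\<dots> = ?S (\<lambda>k j. x j * H' (x k)) - ?S (\<lambda>k j. x j * H' (x j))
      + (?S (\<lambda>k j. H (x k) - x k * H' (x k)) - ?S (\<lambda>k j. H (x j) - x j * H' (x j)))"
    using balanced_flux_identity[OF bal, of "\<lambda>u. H u - u * H' u" x] by simp
  also have "\<dots> = ?S (\<lambda>k j. H (x k) - H (x j) + H' (x k) * (x j - x k))"
    by (simp add: sum_subtractf[symmetric] sum.distrib[symmetric] algebra_simps)
  also have "\<dots> \<le> 0"
  proof (intro sum_nonpos)
    fix k j :: 'n assume "j \<in> UNIV - {k}"
    then have "q k j * ps j \<ge> 0" using q ps by (simp add: less_imp_le)
    moreover have "H (x k) - H (x j) + H' (x k) * (x j - x k) \<le> 0"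
      using tangent[rule_format, of "x k" "x j"] by simp
    ultimately show "q k j * ps j * (H (x k) - H (x j) + H' (x k) * (x j - x k)) \<le> 0"
      by (simp add: mult_nonneg_nonpos)
  qed
  finally show ?thesis .
qed

definition f_divergence :: "(real \<Rightarrow> real) \<Rightarrow> real^'n \<Rightarrow> real^'n \<Rightarrow> real" where
  "f_divergence H Pstar P = (\<Sum>k\<in>UNIV. Pstar$k * H (P$k / Pstar$k))"

lemma f_divergence_nonincreasing:
  fixes Pstar :: "real^'n" and P :: "real \<Rightarrow> real^'n" and H H' :: "real \<Rightarrow> real"
  assumes ps: "\<forall>k. Pstar$k > 0" and rates: "markov_rates Pstar q"
    and ode: "\<forall>t\<in>{0..1}. (P has_vector_derivative kolmogorov_rhs q (P t)) (at t within {0..1})"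
    and H_deriv: "\<And>u. (H has_real_derivative H' u) (at u)"
    and tangent: "\<And>u v. H v \<ge> H u + H' u * (v - u)"
  shows "f_divergence H Pstar (P 1) \<le> f_divergence H Pstar (P 0)"
proof -
  define F where "F t = f_divergence H Pstar (P t)" for t
  define F' where "F' t = (\<Sum>k\<in>UNIV. Pstar$k * (H' (P t $ k / Pstar$k) *
                              (kolmogorov_rhs q (P t) $ k / Pstar$k)))" for t
  have F_deriv: "(F has_real_derivative F' t) (at t within {0..1})" if "t \<in> {0..1}" for t
  proof -
    have "((\<lambda>s. P s $ k) has_real_derivative kolmogorov_rhs q (P t) $ k) (at t within {0..1})" for k
      using bounded_linear.has_vector_derivative[OF bounded_linear_vec_nth ode[rule_format, OF that]]
      by (simp add: has_real_derivative_iff_has_vector_derivative)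
    then show ?thesis
      unfolding F_def F'_def f_divergence_def
      by (intro DERIV_sum DERIV_cmult DERIV_chain2[OF H_deriv] DERIV_cdivide)
  qed
  have F'_nonpos: "F' t \<le> 0" for t
  proof -
    define x where "x k = P t $ k / Pstar$k" for k
    have P_x: "P t $ k = Pstar$k * x k" for k
      using ps[rule_format, of k] unfolding x_def by simp
    have "F' t = (\<Sum>k\<in>UNIV. H' (x k) *
                   (\<Sum>j\<in>UNIV-{k}. q k j * (Pstar$j * x j) - q j k * (Pstar$k * x k)))"
      unfolding F'_def kolmogorov_rhs_def using ps
      by (simp add: x_def[symmetric] P_x less_imp_neq[symmetric])
    also have "\<dots> \<le> 0"
      using rates ps tangent by (intro kolmogorov_dissipation) (auto simp: markov_rates_def)
    finally show ?thesis .
  qed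
  have "continuous_on {0..1} F"
    unfolding continuous_on_eq_continuous_within using F_deriv DERIV_continuous by blast
  moreover have "\<exists>y. (F has_real_derivative y) (at s) \<and> y \<le> 0" if "0 < s" "s < 1" for s
    using F_deriv[of s] F'_nonpos that by (auto simp: at_within_Icc_at)
  ultimately have "F 1 \<le> F 0"
    by (intro DERIV_nonpos_imp_decreasing_open[of 0 1 F]) auto
  then show ?thesis unfolding F_def .
qed

section \<open>Hinge divergences and their smooth approximations\<close>

text \<open>The divergences of the hinge functions at all levels t control the mass of
  P on upper sets of P/P*.\<close>
definition hinge :: "real \<Rightarrow> real \<Rightarrow> real" where
  "hinge t u = max (u - t) 0"

text \<open>A smooth convex function within  sqrt e / 2  above the hinge at level t.\<close>
definition smooth_hinge :: "real \<Rightarrow> real \<Rightarrow> real \<Rightarrow> real" where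
  "smooth_hinge e t u = ((u - t) + sqrt ((u - t)^2 + e)) / 2"

definition smooth_hinge' :: "real \<Rightarrow> real \<Rightarrow> real \<Rightarrow> real" where
  "smooth_hinge' e t u = (1 + (u - t) / sqrt ((u - t)^2 + e)) / 2"

lemma smooth_hinge_deriv:
  assumes "e > 0"
  shows "(smooth_hinge e t has_real_derivative smooth_hinge' e t u) (at u)"
proof -
  have "(u - t)^2 + e > 0" using assms by (simp add: add_nonneg_pos)
  then have "((\<lambda>u. ((u - t) + sqrt ((u - t)^2 + e)) / 2) has_real_derivative
          (1 + inverse (sqrt ((u - t)^2 + e)) / 2 * (2 * (u - t))) / 2) (at u)"
    by (auto intro!: derivative_eq_intros)
  moreover have "(1 + inverse r / 2 * (2 * a)) / 2 = (1 + a / r) / 2" for r a :: real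
    by (simp add: inverse_eq_divide)
  ultimately show ?thesis
    unfolding smooth_hinge_def[abs_def] smooth_hinge'_def by (metis DERIV_cong)
qed

text \<open>Convexity in tangent form; it reduces to the Cauchy-Schwarz inequality
  a b + e \<le> sqrt (a^2 + e) sqrt (b^2 + e).\<close>
lemma smooth_hinge_tangent:
  assumes e: "e > 0"
  shows "smooth_hinge e t v \<ge> smooth_hinge e t u + smooth_hinge' e t u * (v - u)"
proof -
  define a b where "a = u - t" and "b = v - t"
  define r s where "r = sqrt (a^2 + e)" and "s = sqrt (b^2 + e)"
  have r_pos: "r > 0" unfolding r_def using e by (simp add: add_nonneg_pos)
  have r_sq: "r * r = a^2 + e" unfolding r_def using e by (simp add: add_nonneg_nonneg less_imp_le)
  have "0 \<le> e * (a - b)^2" using e by simp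
  then have "(a*b + e)^2 \<le> (a^2 + e) * (b^2 + e)"
    by (simp add: power2_eq_square algebra_simps)
  then have "sqrt ((a*b + e)^2) \<le> sqrt ((a^2 + e) * (b^2 + e))" by (rule real_sqrt_le_mono)
  then have "\<bar>a*b + e\<bar> \<le> r * s"
    unfolding r_def s_def by (simp add: real_sqrt_mult)
  moreover have "r * (r + a * (b - a) / r) = r * r + a * (b - a)"
    using r_pos by (simp add: distrib_left)
  moreover have "r * r + a * (b - a) = a*b + e"
    using r_sq by (simp add: power2_eq_square algebra_simps)
  ultimately have "r * (r + a * (b - a) / r) \<le> r * s" by linarith
  then have "r + a * (b - a) / r \<le> s" using r_pos by simp
  moreover have "(a + r)/2 + (1 + a/r)/2 * (b - a) = (b + (r + a * (b - a) / r)) / 2"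
    by (simp add: algebra_simps add_divide_distrib diff_divide_distrib)
  ultimately have "(a + r)/2 + (1 + a/r)/2 * (b - a) \<le> (b + s)/2" by simp
  moreover have "v - u = b - a" unfolding a_def b_def by simp
  ultimately show ?thesis
    unfolding smooth_hinge_def smooth_hinge'_def a_def[symmetric] b_def[symmetric] r_def[symmetric] s_def[symmetric] by simp
qed

lemma smooth_hinge_bounds:
  assumes e: "e > 0"
  shows "hinge t u \<le> smooth_hinge e t u"
    and "smooth_hinge e t u \<le> hinge t u + sqrt e / 2"
proof -
  have "\<bar>u - t\<bar> \<le> sqrt ((u - t)^2 + e)"
    using e real_sqrt_le_mono[of "(u - t)^2" "(u - t)^2 + e"] by simp
  then show "hinge t u \<le> smooth_hinge e t u"
    unfolding hinge_def smooth_hinge_def max_def by (auto simp: abs_if split: if_splits)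
  have "sqrt ((u - t)^2 + e) \<le> \<bar>u - t\<bar> + sqrt e"
    using sqrt_add_le_add_sqrt[of "(u - t)^2" e] e by simp
  then show "smooth_hinge e t u \<le> hinge t u + sqrt e / 2"
    unfolding hinge_def smooth_hinge_def max_def by (auto simp: abs_if split: if_splits)
qed

lemma f_divergence_mono:
  assumes "\<forall>k. Pstar$k > 0" and "\<And>u. G u \<le> H u"
  shows "f_divergence G Pstar P \<le> f_divergence H Pstar P"
  unfolding f_divergence_def using assms
  by (intro sum_mono mult_left_mono) (auto simp: less_imp_le)

lemma f_divergence_add_const:
  assumes "(\<Sum>k\<in>UNIV. Pstar$k) = 1"
  shows "f_divergence (\<lambda>u. H u + c) Pstar P = f_divergence H Pstar P + c"
  unfolding f_divergence_def
  by (simp add: distrib_left sum.distrib sum_distrib_right[symmetric] assms)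

text \<open>Every hinge divergence decreases along a single Markov step: approximate the
  hinge from above by smooth convex functions within any prescribed tolerance.\<close>
lemma hinge_divergence_step:
  fixes Pstar P0 P1 :: "real^'n"
  assumes ps: "\<forall>k. Pstar$k > 0" and ps_sum: "(\<Sum>k\<in>UNIV. Pstar$k) = 1"
    and step: "markov_step Pstar P0 P1"
  shows "f_divergence (hinge t) Pstar P1 \<le> f_divergence (hinge t) Pstar P0"
proof (rule field_le_epsilon)
  fix d :: real assume "d > 0"
  define e where "e = (2*d)^2"
  have e: "e > 0" and sqrt_e: "sqrt e / 2 = d"
    unfolding e_def using \<open>d > 0\<close> real_sqrt_abs[of "2*d"] by simp_all
  obtain q P where rates: "markov_rates Pstar q" and "P 0 = P0" and "P 1 = P1"
    and ode: "\<forall>t\<in>{0..1}. (P has_vector_derivative kolmogorov_rhs q (P t)) (at t within {0..1})"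
    using step unfolding markov_step_def by blast
  have "f_divergence (hinge t) Pstar P1 \<le> f_divergence (smooth_hinge e t) Pstar P1"
    using ps smooth_hinge_bounds(1)[OF e] by (rule f_divergence_mono)
  also have "\<dots> \<le> f_divergence (smooth_hinge e t) Pstar P0"
    using f_divergence_nonincreasing[OF ps rates ode smooth_hinge_deriv[OF e] smooth_hinge_tangent[OF e]]
      \<open>P 0 = P0\<close> \<open>P 1 = P1\<close> by simp
  also have "\<dots> \<le> f_divergence (\<lambda>u. hinge t u + d) Pstar P0"
    using ps smooth_hinge_bounds(2)[OF e] sqrt_e by (intro f_divergence_mono) auto
  also have "\<dots> = f_divergence (hinge t) Pstar P0 + d"
    by (rule f_divergence_add_const[OF ps_sum])
  finally show "f_divergence (hinge t) Pstar P1 \<le> f_divergence (hinge t) Pstar P0 + d" .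
qed

section \<open>From Markov steps to the Markov order\<close>

text \<open>A continuous function which does not increase along Markov steps does not
  increase along the Markov order: the pairs on which it decreases form a closed
  transitive relation containing all steps.\<close>
lemma markov_order_monotone:
  fixes V :: "real^'n \<Rightarrow> real"
  assumes cont: "continuous_on UNIV V"
    and step: "\<And>A B. A \<in> pos_simplex \<Longrightarrow> B \<in> pos_simplex \<Longrightarrow> markov_step Pstar A B \<Longrightarrow> V B \<le> V A"
    and order: "(P0, P1) \<in> markov_order Pstar"
  shows "V P1 \<le> V P0"
proof -
  define R where "R = {(A,B). A \<in> pos_simplex \<and> B \<in> pos_simplex \<and> V B \<le> V A}"
  have "closed {p :: (real^'n) \<times> (real^'n). V (snd p) \<le> V (fst p)}"
    by (intro closed_Collect_le continuous_on_compose2[OF cont] continuous_on_fst continuous_on_snd) auto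
  moreover have "R = (pos_simplex \<times> pos_simplex) \<inter> {p. V (snd p) \<le> V (fst p)}"
    unfolding R_def by auto
  ultimately have "closedin (top_of_set (pos_simplex \<times> pos_simplex)) R"
    by (simp add: closedin_closed_Int)
  moreover have "trans R" unfolding R_def trans_def by auto
  moreover have "{(A, B). A \<in> pos_simplex \<and> B \<in> pos_simplex \<and> markov_step Pstar A B} \<subseteq> R"
    unfolding R_def using step by auto
  moreover have "R \<subseteq> pos_simplex \<times> pos_simplex" unfolding R_def by auto
  ultimately have "markov_order Pstar \<subseteq> R"
    unfolding markov_order_def by (intro Inter_lower) blast
  then show ?thesis using order unfolding R_def by auto
qed

lemma hinge_divergence_order:
  fixes Pstar P0 P1 :: "real^'n"
  assumes ps: "Pstar \<in> pos_simplex" and order: "(P0, P1) \<in> markov_order Pstar"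
  shows "f_divergence (hinge t) Pstar P1 \<le> f_divergence (hinge t) Pstar P0"
proof (rule markov_order_monotone[OF _ _ order])
  have ps_pos: "\<forall>k. Pstar$k > 0" and ps_sum: "(\<Sum>k\<in>UNIV. Pstar$k) = 1"
    using ps unfolding pos_simplex_def by auto
  show "continuous_on UNIV (f_divergence (hinge t) Pstar)"
    unfolding f_divergence_def[abs_def] hinge_def
    by (intro continuous_intros) (use ps_pos in \<open>auto simp: less_imp_neq[symmetric]\<close>)
  show "\<And>A B. markov_step Pstar A B \<Longrightarrow>
          f_divergence (hinge t) Pstar B \<le> f_divergence (hinge t) Pstar A"
    by (rule hinge_divergence_step[OF ps_pos ps_sum])
qed

section \<open>Mass on upper sets\<close>

definition upper_set :: "('n \<Rightarrow> real) \<Rightarrow> 'n set \<Rightarrow> bool" where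
  "upper_set x S \<longleftrightarrow> (\<forall>a b. b \<in> S \<longrightarrow> x b < x a \<longrightarrow> a \<in> S)"

text \<open>If all hinge divergences decrease from P0 to P1, then P1 - P0 carries
  non-positive mass on every upper set of x = P0/P*: at the minimal level v of x
  on S, the hinge divergence of P0 is exactly the weighted mass of S above v,
  while that of P1 is at least the corresponding quantity for P1.\<close>
lemma upper_set_mass_nonpos:
  fixes Pstar P0 P1 :: "real^'n"
  assumes ps: "\<forall>k. Pstar$k > 0"
    and hinge_le: "\<And>t. f_divergence (hinge t) Pstar P1 \<le> f_divergence (hinge t) Pstar P0"
    and upper: "upper_set (\<lambda>k. P0$k / Pstar$k) S"
  shows "(\<Sum>k\<in>S. P1$k - P0$k) \<le> 0"
proof (cases "S = {}")
  case False
  define x x1 where "x k = P0$k / Pstar$k" and "x1 k = P1$k / Pstar$k" for k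
  define v where "v = Min (x ` S)"
  have ge_v: "v \<le> x k" if "k \<in> S" for k unfolding v_def using that by simp
  have "v \<in> x ` S" unfolding v_def using False by (intro Min_in) auto
  then obtain s where "s \<in> S" "x s = v" by auto
  then have above_v_in_S: "k \<in> S" if "v < x k" for k
    using upper that unfolding upper_set_def x_def by blast
  have outside_S: "max (x k - v) 0 = 0" if "k \<notin> S" for k
    using above_v_in_S[of k] that by (cases "v < x k") (auto simp: max_def)
  have "f_divergence (hinge v) Pstar P0 = (\<Sum>k\<in>UNIV. Pstar$k * max (x k - v) 0)"
    unfolding f_divergence_def hinge_def x_def ..
  also have "\<dots> = (\<Sum>k\<in>S. Pstar$k * max (x k - v) 0)"
    using outside_S by (intro sum.mono_neutral_right) auto
  also have "\<dots> = (\<Sum>k\<in>S. Pstar$k * (x k - v))"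
    using ge_v by (intro sum.cong) auto
  finally have D0: "f_divergence (hinge v) Pstar P0 = (\<Sum>k\<in>S. Pstar$k * (x k - v))" .
  have "(\<Sum>k\<in>S. Pstar$k * (x1 k - v)) \<le> (\<Sum>k\<in>S. Pstar$k * max (x1 k - v) 0)"
    using ps by (intro sum_mono mult_left_mono) (auto simp: less_imp_le)
  also have "\<dots> \<le> (\<Sum>k\<in>UNIV. Pstar$k * max (x1 k - v) 0)"
    using ps by (intro sum_mono2) (auto simp: less_imp_le)
  also have "\<dots> = f_divergence (hinge v) Pstar P1"
    unfolding f_divergence_def hinge_def x1_def ..
  finally have D1: "(\<Sum>k\<in>S. Pstar$k * (x1 k - v)) \<le> f_divergence (hinge v) Pstar P1" .
  have "(\<Sum>k\<in>S. P1$k - P0$k) = (\<Sum>k\<in>S. Pstar$k * (x1 k - v)) - (\<Sum>k\<in>S. Pstar$k * (x k - v))"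
    using ps by (simp add: sum_subtractf[symmetric] x_def x1_def algebra_simps less_imp_neq[symmetric])
  also have "\<dots> \<le> 0" using D0 D1 hinge_le[of v] by simp
  finally show ?thesis .
qed simp

section \<open>A combinatorial description of the cone Q\<close>

definition sign_gen :: "('n::{finite,linorder} \<Rightarrow> real) \<Rightarrow> 'n \<times> 'n \<Rightarrow> real^('n::{finite,linorder})" where
  "sign_gen x p = sgn (x (fst p) - x (snd p)) *\<^sub>R gamma (fst p) (snd p)"

definition sign_cone :: "('n::{finite,linorder} \<Rightarrow> real) \<Rightarrow> (real^('n::{finite,linorder})) set" where
  "sign_cone x = {y. \<exists>c. (\<forall>p. c p \<ge> 0) \<and> y = (\<Sum>p\<in>{(j,i). j < i}. c p *\<^sub>R sign_gen x p)}"

lemma Qcone_eq_sign_cone: "Qcone P Pstar = sign_cone (\<lambda>k. P$k / Pstar$k)"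
  unfolding Qcone_def sign_cone_def sign_gen_def split_def by simp

lemma sign_cone_zero: "0 \<in> sign_cone x"
  unfolding sign_cone_def by (intro CollectI exI[of _ "\<lambda>_. 0"]) simp

lemma sign_cone_add:
  assumes "y1 \<in> sign_cone x" "y2 \<in> sign_cone x"
  shows "y1 + y2 \<in> sign_cone x"
proof -
  obtain c1 where c1: "\<forall>p. c1 p \<ge> 0" "y1 = (\<Sum>p\<in>{(j,i). j < i}. c1 p *\<^sub>R sign_gen x p)"
    using assms(1) unfolding sign_cone_def by blast
  obtain c2 where c2: "\<forall>p. c2 p \<ge> 0" "y2 = (\<Sum>p\<in>{(j,i). j < i}. c2 p *\<^sub>R sign_gen x p)"
    using assms(2) unfolding sign_cone_def by blast
  have "y1 + y2 = (\<Sum>p\<in>{(j,i). j < i}. (c1 p + c2 p) *\<^sub>R sign_gen x p)"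
    unfolding c1(2) c2(2) scaleR_add_left sum.distrib ..
  moreover have "\<forall>p. c1 p + c2 p \<ge> 0" using c1(1) c2(1) by (simp add: add_nonneg_nonneg)
  ultimately show ?thesis
    unfolding sign_cone_def by (intro CollectI exI[of _ "\<lambda>p. c1 p + c2 p"] conjI)
qed

lemma gamma_nth: "a \<noteq> b \<Longrightarrow> gamma a b $ k = (if k = b then 1 else 0) - (if k = a then 1 else 0)"
  unfolding gamma_def by auto

lemma gamma_swap: "a \<noteq> b \<Longrightarrow> gamma b a = - gamma a b"
  by (simp add: vec_eq_iff gamma_nth)

lemma sign_cone_transfer:
  fixes x :: "'n::{finite,linorder} \<Rightarrow> real"
  assumes "x b < x a" "d \<ge> 0"
  shows "d *\<^sub>R gamma a b \<in> sign_cone x"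
proof -
  have single: "d *\<^sub>R sign_gen x (j,i) \<in> sign_cone x" if "j < i" for j i
  proof -
    have "(\<Sum>p\<in>{(j,i). j < i}. (if p = (j,i) then d else 0) *\<^sub>R sign_gen x p)
        = (\<Sum>p\<in>{(j,i). j < i}. if p = (j,i) then d *\<^sub>R sign_gen x p else 0)"
      by (intro sum.cong) auto
    also have "\<dots> = d *\<^sub>R sign_gen x (j,i)"
      using that by (simp add: sum.delta)
    finally have "(\<Sum>p\<in>{(j,i). j < i}. (if p = (j,i) then d else 0) *\<^sub>R sign_gen x p)
        = d *\<^sub>R sign_gen x (j,i)" .
    then show ?thesis
      unfolding sign_cone_def using \<open>d \<ge> 0\<close>
      by (intro CollectI exI[of _ "\<lambda>p. if p = (j,i) then d else 0"]) auto
  qed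
  have "a \<noteq> b" using assms(1) by auto
  then consider "a < b" | "b < a" by fastforce
  then show ?thesis
  proof cases
    case 1
    then show ?thesis using single[of a b] assms(1) by (simp add: sign_gen_def)
  next
    case 2
    then show ?thesis using single[of b a] assms(1) \<open>a \<noteq> b\<close> by (simp add: sign_gen_def gamma_swap[OF \<open>a \<noteq> b\<close>])
  qed
qed

definition upper_nonpos :: "('n \<Rightarrow> real) \<Rightarrow> real^'n \<Rightarrow> bool" where
  "upper_nonpos x y \<longleftrightarrow> (\<Sum>k\<in>UNIV. y$k) = 0 \<and> (\<forall>S. upper_set x S \<longrightarrow> (\<Sum>k\<in>S. y$k) \<le> 0)"

text \<open>For y \<noteq> 0 satisfying the condition, pick b with y_b > 0 and x_b maximal among
  the positive entries; then some a with x_a > x_b has y_a < 0, because the upper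
  set  {x > x_b} \<union> {x = x_b, y > 0}  has non-positive mass.\<close>
lemma upper_nonpos_transfer_pair:
  fixes x :: "'n::finite \<Rightarrow> real" and y :: "real^'n"
  assumes cond: "upper_nonpos x y" and "y \<noteq> 0"
  obtains a b where "y$b > 0" "\<And>k. y$k > 0 \<Longrightarrow> x k \<le> x b" "x b < x a" "y$a < 0"
proof -
  have "\<exists>k. y$k > 0"
  proof (rule ccontr)
    assume "\<nexists>k. y$k > 0"
    then have "\<forall>k\<in>UNIV. - (y$k) \<ge> 0" by (simp add: not_less)
    moreover have "(\<Sum>k\<in>UNIV. - (y$k)) = 0"
      using cond unfolding upper_nonpos_def by (simp add: sum_negf)
    ultimately have "\<forall>k. y$k = 0" using sum_nonneg_eq_0_iff[of UNIV "\<lambda>k. - (y$k)"] by simp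
    then show False using \<open>y \<noteq> 0\<close> by (simp add: vec_eq_iff)
  qed
  then have "Max (x ` {k. y$k > 0}) \<in> x ` {k. y$k > 0}" by (intro Max_in) auto
  then obtain b where yb: "y$b > 0" and "x b = Max (x ` {k. y$k > 0})" by auto
  then have b_max: "x k \<le> x b" if "y$k > 0" for k using that by simp
  define U T where "U = {k. x b < x k}" and "T = {k. x k = x b \<and> y$k > 0}"
  have "upper_set x (U \<union> T)" unfolding upper_set_def U_def T_def by auto
  then have "(\<Sum>k\<in>U \<union> T. y$k) \<le> 0" using cond unfolding upper_nonpos_def by blast
  then have "(\<Sum>k\<in>U. y$k) + (\<Sum>k\<in>T. y$k) \<le> 0"
    by (subst (asm) sum.union_disjoint) (auto simp: U_def T_def)
  moreover have "(\<Sum>k\<in>T. y$k) \<ge> y$b"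
    by (rule member_le_sum) (auto simp: T_def yb less_imp_le)
  ultimately have "(\<Sum>k\<in>U. y$k) < 0" using yb by linarith
  then have "\<exists>a\<in>U. y$a < 0"
    using sum_nonneg[of U "\<lambda>k. y$k"] by (meson not_le)
  then obtain a where "a \<in> U" "y$a < 0" by blast
  then show ?thesis using that yb b_max unfolding U_def by blast
qed

text \<open>Then an upper
  set containing a but not b has mass at most -d: either it contains no positive
  entry (then its mass is at most y_a), or its positive entries lie at level x_b,
  so adding all positive entries at that level keeps it upper and adds at least y_b.\<close>
lemma upper_set_mass_separated:
  fixes x :: "'n::finite \<Rightarrow> real" and y :: "real^'n"
  assumes cond: "upper_nonpos x y"
    and yb: "y$b > 0" and b_max: "\<And>k. y$k > 0 \<Longrightarrow> x k \<le> x b"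
    and ya: "y$a < 0" and d: "d = min (y$b) (- (y$a))"
    and S: "upper_set x S" "a \<in> S" "b \<notin> S"
  shows "(\<Sum>k\<in>S. y$k) \<le> - d"
proof (cases "\<exists>c\<in>S. y$c > 0")
  case False
  then have "(\<Sum>k\<in>S - {a}. y$k) \<le> 0" by (intro sum_nonpos) (auto simp: not_less)
  then show ?thesis using S(2) d by (simp add: sum.remove)
next
  case True
  then obtain c where "c \<in> S" "y$c > 0" by blast
  moreover have "\<not> x c < x b" using S(1,3) \<open>c \<in> S\<close> unfolding upper_set_def by blast
  ultimately have "x c = x b" using b_max[of c] by linarith
  define T where "T = {k. x k = x b \<and> y$k > 0}"
  have "upper_set x (S \<union> T)"
    using S(1) \<open>c \<in> S\<close> \<open>x c = x b\<close> unfolding upper_set_def T_def by auto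
  then have "(\<Sum>k\<in>S \<union> T. y$k) \<le> 0" using cond unfolding upper_nonpos_def by blast
  moreover have "(\<Sum>k\<in>S \<union> T. y$k) = (\<Sum>k\<in>S. y$k) + (\<Sum>k\<in>T - S. y$k)"
    using sum.union_disjoint[of S "T - S" "\<lambda>k. y$k"] by (simp add: Un_Diff_cancel)
  moreover have "(\<Sum>k\<in>T - S. y$k) \<ge> y$b"
    by (rule member_le_sum) (use S(3) yb in \<open>auto simp: T_def less_imp_le\<close>)
  ultimately show ?thesis using d by linarith
qed

text \<open>Hence, with a, b, d as above and x_b < x_a, the vector y - d gamma^{ab} still
  satisfies the condition; upper sets containing b contain a as well.\<close>
lemma upper_nonpos_after_transfer:
  fixes x :: "'n::finite \<Rightarrow> real" and y :: "real^'n"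
  assumes cond: "upper_nonpos x y"
    and yb: "y$b > 0" and b_max: "\<And>k. y$k > 0 \<Longrightarrow> x k \<le> x b"
    and xab: "x b < x a" and ya: "y$a < 0"
    and d: "d = min (y$b) (- (y$a))"
  shows "upper_nonpos x (y - d *\<^sub>R gamma a b)"
proof -
  have "a \<noteq> b" using xab by auto
  have mass: "(\<Sum>k\<in>S. (y - d *\<^sub>R gamma a b)$k)
      = (\<Sum>k\<in>S. y$k) - d * ((if b \<in> S then 1 else 0) - (if a \<in> S then 1 else 0))" for S
    using \<open>a \<noteq> b\<close> by (simp add: gamma_nth sum_subtractf sum.delta sum_distrib_left[symmetric])
  have a_in: "a \<in> S" if "upper_set x S" "b \<in> S" for S
    using that xab unfolding upper_set_def by blast
  show ?thesis
    unfolding upper_nonpos_def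
  proof (intro conjI allI impI)
    show "(\<Sum>k\<in>UNIV. (y - d *\<^sub>R gamma a b)$k) = 0"
      using cond mass[of UNIV] unfolding upper_nonpos_def by simp
    fix S assume S: "upper_set x S"
    then have "(\<Sum>k\<in>S. y$k) \<le> 0" using cond unfolding upper_nonpos_def by blast
    then show "(\<Sum>k\<in>S. (y - d *\<^sub>R gamma a b)$k) \<le> 0"
      using mass[of S] a_in[OF S] upper_set_mass_separated[OF cond yb b_max ya d S]
      by (cases "a \<in> S"; cases "b \<in> S") auto
  qed
qed

text \<open>Main combinatorial fact: the condition forces membership in the cone.  The
  transfer step removes at least one non-zero entry, so induct on the support.\<close>
lemma upper_nonpos_imp_sign_cone:
  fixes x :: "'n::{finite,linorder} \<Rightarrow> real" and y :: "real^('n::{finite,linorder})"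
  assumes "upper_nonpos x y"
  shows "y \<in> sign_cone x"
  using assms
proof (induction "card {k. y$k \<noteq> 0}" arbitrary: y rule: less_induct)
  case less
  show ?case
  proof (cases "y = 0")
    case True
    then show ?thesis using sign_cone_zero by simp
  next
    case False
    obtain a b where yb: "y$b > 0" and b_max: "\<And>k. y$k > 0 \<Longrightarrow> x k \<le> x b"
      and xab: "x b < x a" and ya: "y$a < 0"
      using upper_nonpos_transfer_pair[OF less.prems False] by blast
    define d where "d = min (y$b) (- (y$a))"
    define y' where "y' = y - d *\<^sub>R gamma a b"
    have "a \<noteq> b" using xab by auto
    have y'_nth: "y'$k = y$k - d * ((if k = b then 1 else 0) - (if k = a then 1 else 0))" for k
      unfolding y'_def using \<open>a \<noteq> b\<close> by (simp add: gamma_nth)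
    have "{k. y'$k \<noteq> 0} \<subset> {k. y$k \<noteq> 0}"
    proof
      show "{k. y'$k \<noteq> 0} \<subseteq> {k. y$k \<noteq> 0}" using y'_nth yb ya by auto
      have "y'$b = 0 \<or> y'$a = 0" using y'_nth[of a] y'_nth[of b] \<open>a \<noteq> b\<close> by (simp add: d_def min_def)
      moreover have "y$b \<noteq> 0" "y$a \<noteq> 0" using yb ya by auto
      ultimately show "{k. y'$k \<noteq> 0} \<noteq> {k. y$k \<noteq> 0}" by blast
    qed
    then have "card {k. y'$k \<noteq> 0} < card {k. y$k \<noteq> 0}" by (intro psubset_card_mono) auto
    moreover have "upper_nonpos x y'"
      unfolding y'_def by (rule upper_nonpos_after_transfer[OF less.prems yb b_max xab ya d_def])
    ultimately have "y' \<in> sign_cone x" by (rule less.hyps)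
    moreover have "d *\<^sub>R gamma a b \<in> sign_cone x"
      using sign_cone_transfer[OF xab] yb ya by (simp add: d_def)
    ultimately have "y' + d *\<^sub>R gamma a b \<in> sign_cone x" by (rule sign_cone_add)
    then show ?thesis unfolding y'_def by simp
  qed
qed

theorem corollary3:
  fixes Pstar P0 P1 :: "real^'n::{finite,linorder}"
  assumes "CARD('n) \<ge> 2"
    and "Pstar \<in> pos_simplex"
    and "P0 \<in> pos_simplex" and "P1 \<in> pos_simplex"
    and "(P0, P1) \<in> markov_order Pstar"
  shows "P1 \<in> (\<lambda>x. P0 + x) ` Qcone P0 Pstar"
proof -
  have ps: "\<forall>k. Pstar$k > 0" using assms(2) unfolding pos_simplex_def by auto
  have "(\<Sum>k\<in>UNIV. (P1 - P0)$k) = 0"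
    using assms(3,4) unfolding pos_simplex_def by (simp add: sum_subtractf)
  moreover have "(\<Sum>k\<in>S. (P1 - P0)$k) \<le> 0" if "upper_set (\<lambda>k. P0$k / Pstar$k) S" for S
    using upper_set_mass_nonpos[OF ps hinge_divergence_order[OF assms(2,5)] that] by simp
  ultimately have "upper_nonpos (\<lambda>k. P0$k / Pstar$k) (P1 - P0)"
    unfolding upper_nonpos_def by blast
  then have "P1 - P0 \<in> Qcone P0 Pstar"
    unfolding Qcone_eq_sign_cone by (rule upper_nonpos_imp_sign_cone)
  then show ?thesis by (intro image_eqI[of _ _ "P1 - P0"]) simp_all
qed

end
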